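(* Let $E_0 \subset \mathbb{Z}$ satisfy $\limsup_{n\to\infty} |E_0 \cap [1,n]|/n > 0$. Then the set \[ D = \{ xy - z^2 : x,y,z \in E_0 - E_0\} \subset \mathbb{Z}, \] where $E_0 - E_0 = \{a-b : a,b\in E_0\}$, contains a non-trivial subgroup of $\mathbb{Z}$. *)

theory Defs
  imports "HOL-Analysis.Analysis"
begin

definition upper_density :: "int set \<Rightarrow> ereal" where
  "upper_density E = limsup (\<lambda>n::nat. ereal (real (card (E \<inter> {1..int n})) / real n))"

definition diffset :: "int set \<Rightarrow> int set" where
  "diffset E = {a - b | a b. a \<in> E \<and> b \<in> E}"

definition int_subgroup :: "int set \<Rightarrow> bool" where
  "int_subgroup H \<longleftrightarrow> 0 \<in> H \<and> (\<forall>a\<in>H. \<forall>b\<in>H. a - b \<in> H)"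

end

theory Submission
  imports Defs
begin

text \<open>
  Positive upper density \<delta> yields, for every d, a bound M such that each integer vector
  c = (c 0, ..., c (d - 1)) has a multiple s * c with 1 \<le> s \<le> M lying coordinatewise
  in E - E: otherwise the M + 1 translates A^d + a * c (0 \<le> a \<le> M) of A = E \<inter> [1, N]
  would be pairwise disjoint (a collision puts (b - a) * c into (A - A)^d) inside a box of
  side about 2 N, which is impossible once (M + 1) \<delta>^d > 2^d.
  Applying this with d = 1 to t, and with d = R to the vector (R!/1, ..., R!/R), gives
  K = s * R! such that every multiple K t factors as (i t) * (s * R!/i) with both factors
  in E - E.  Taking z = 0, the whole subgroup K \<int> lies in {x y - z^2}.
\<close>

lemma upper_density_pos_frequently:
  fixes E :: "int set"
  assumes "upper_density E > 0"
  obtains \<delta> :: real where "\<delta> > 0"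
    and "\<exists>\<^sub>F N in sequentially. \<delta> * real N \<le> real (card (E \<inter> {1..int N}))"
proof -
  define f where "f = (\<lambda>n::nat. ereal (real (card (E \<inter> {1..int n})) / real n))"
  have "limsup f > 0" using assms unfolding upper_density_def f_def by simp
  then obtain \<delta> where \<delta>: "0 < ereal \<delta>" "ereal \<delta> < limsup f" using ereal_dense2 by blast
  then obtain y where "y > ereal \<delta>" "\<not> eventually (\<lambda>n. y > f n) sequentially"
    using Limsup_le_iff[of sequentially f "ereal \<delta>"] by auto
  then have "\<exists>\<^sub>F n in sequentially. ereal \<delta> < f n"
    by (auto simp: not_eventually not_less elim!: frequently_elim1)
  then have "\<exists>\<^sub>F n in sequentially. \<delta> * real n \<le> real (card (E \<inter> {1..int n}))"
  proof (rule frequently_elim1)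
    fix n assume "ereal \<delta> < f n"
    then have "\<delta> < real (card (E \<inter> {1..int n})) / real n" unfolding f_def by simp
    moreover have "n > 0" using calculation \<delta>(1) by (cases "n = 0") auto
    ultimately show "\<delta> * real n \<le> real (card (E \<inter> {1..int n}))"
      by (simp add: pos_less_divide_eq less_imp_le)
  qed
  with \<delta>(1) show thesis using that by simp
qed

lemma diffset_mono: "A \<subseteq> B \<Longrightarrow> diffset A \<subseteq> diffset B"
  unfolding diffset_def by blast

lemma zero_in_diffset: "x \<in> diffset E \<Longrightarrow> 0 \<in> diffset E"
  unfolding diffset_def by force

lemma int_subgroup_multiples: "int_subgroup (range (\<lambda>t. K * t))"
  unfolding int_subgroup_def by (auto simp: right_diff_distrib[symmetric])

lemma translate_collision_diffset:
  fixes e e' :: "'i \<Rightarrow> int"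
  assumes "e \<in> PiE I (\<lambda>_. A)" "e' \<in> PiE I (\<lambda>_. A)"
    and "\<And>j. j \<in> I \<Longrightarrow> e j + a * c j = e' j + b * c j"
    and "j \<in> I"
  shows "(b - a) * c j \<in> diffset A"
proof -
  have "(b - a) * c j = e j - e' j" using assms(3)[OF assms(4)] by (simp add: algebra_simps)
  moreover have "e j \<in> A" "e' j \<in> A" using assms(1,2,4) by auto
  ultimately show ?thesis unfolding diffset_def by blast
qed

lemma card_power_translates_le_box:
  fixes A :: "int set" and c :: "nat \<Rightarrow> int" and C :: int
  assumes A: "A \<subseteq> {1..int N}"
    and C: "\<And>j. j < d \<Longrightarrow> int M * \<bar>c j\<bar> \<le> C"
    and no_recurrence: "\<And>s. s \<in> {1..int M} \<Longrightarrow> \<exists>j<d. s * c j \<notin> diffset A"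
  shows "(M + 1) * card A ^ d \<le> nat (int N + 2 * C) ^ d"
proof -
  define P where "P = PiE {..<d} (\<lambda>_. A)"
  define B where "B = PiE {..<d} (\<lambda>_. {1 - C .. int N + C})"
  define shift where "shift = (\<lambda>(a::nat) e. restrict (\<lambda>j. e j + int a * c j) {..<d})"
  have finite_A: "finite A" using A finite_subset by blast
  have shift_into_box: "shift a ` P \<subseteq> B" if "a \<le> M" for a
  proof (rule image_subsetI)
    fix e assume e: "e \<in> P"
    have "e j + int a * c j \<in> {1 - C..int N + C}" if "j < d" for j
    proof -
      have "\<bar>int a * c j\<bar> \<le> C"
        using \<open>a \<le> M\<close> C[OF that] mult_right_mono[of "int a" "int M" "\<bar>c j\<bar>"]
        by (simp add: abs_mult)
      moreover have "e j \<in> {1..int N}" using e that A unfolding P_def by auto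
      ultimately show ?thesis by auto
    qed
    then show "shift a e \<in> B" unfolding shift_def B_def by (simp add: restrict_PiE_iff)
  qed
  have inj_shift: "inj_on (shift a) P" for a
  proof (rule inj_onI)
    fix e e' assume e: "e \<in> P" "e' \<in> P" "shift a e = shift a e'"
    show "e = e'"
    proof (rule PiE_ext[OF e(1)[unfolded P_def] e(2)[unfolded P_def]])
      fix j assume "j \<in> {..<d}"
      then show "e j = e' j" using fun_cong[OF e(3), of j] unfolding shift_def by simp
    qed
  qed
  have shift_disjoint_less: "shift a ` P \<inter> shift b ` P = {}" if "a < b" "b \<le> M" for a b
  proof (rule ccontr)
    assume "shift a ` P \<inter> shift b ` P \<noteq> {}"
    then obtain e e' where e: "e \<in> P" "e' \<in> P" "shift a e = shift b e'" by blast
    have "e j + int a * c j = e' j + int b * c j" if "j \<in> {..<d}" for j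
      using fun_cong[OF e(3), of j] that unfolding shift_def by simp
    then have "(int b - int a) * c j \<in> diffset A" if "j < d" for j
      using that e(1,2) unfolding P_def by (intro translate_collision_diffset[of e _ _ e']) auto
    moreover have "int b - int a \<in> {1..int M}" using that by auto
    ultimately show False using no_recurrence by blast
  qed
  have shift_disjoint: "shift a ` P \<inter> shift b ` P = {}" if "a \<noteq> b" "a \<le> M" "b \<le> M" for a b
    using that shift_disjoint_less[of a b] shift_disjoint_less[of b a]
    by (cases "a < b") (auto simp: Int_commute)
  have finite_P: "finite P" unfolding P_def using finite_A by (intro finite_PiE) auto
  have "(M + 1) * card A ^ d = (\<Sum>a\<le>M. card (shift a ` P))"
    using inj_shift by (simp add: card_image P_def card_PiE)
  also have "\<dots> = card (\<Union>a\<le>M. shift a ` P)"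
    using finite_P shift_disjoint by (intro card_UN_disjoint[symmetric]) auto
  also have "\<dots> \<le> card B"
    using shift_into_box unfolding B_def by (intro card_mono finite_PiE) auto
  also have "\<dots> = nat (int N + 2 * C) ^ d" unfolding B_def by (simp add: card_PiE add.commute)
  finally show ?thesis .
qed

lemma diffset_multiple_recurrence:
  fixes E :: "int set" and \<delta> :: real
  assumes "\<delta> > 0"
    and dense: "\<exists>\<^sub>F N in sequentially. \<delta> * real N \<le> real (card (E \<inter> {1..int N}))"
  shows "\<exists>M::nat. \<forall>c::nat \<Rightarrow> int. \<exists>s\<in>{1..int M}. \<forall>j<d. s * c j \<in> diffset E"
proof -
  obtain M :: nat where M: "(2 / \<delta>) ^ d < real M"
    using reals_Archimedean2 by blast
  show ?thesis
  proof (intro exI[of _ M] allI, rule ccontr)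
    fix c :: "nat \<Rightarrow> int"
    assume no_recurrence: "\<not> (\<exists>s\<in>{1..int M}. \<forall>j<d. s * c j \<in> diffset E)"
    define C where "C = int M * (\<Sum>j<d. \<bar>c j\<bar>)"
    have "C \<ge> 0" unfolding C_def by (simp add: sum_nonneg)
    have C: "int M * \<bar>c j\<bar> \<le> C" if "j < d" for j
      unfolding C_def using that by (intro mult_left_mono member_le_sum) auto
    have "\<forall>\<^sub>F N in sequentially. N \<ge> max 1 (nat (2 * C))"
      by (rule eventually_ge_at_top)
    from frequently_eventually_conj[OF dense this] obtain N where N:
      "N \<ge> 1" "nat (2 * C) \<le> N" "\<delta> * real N \<le> real (card (E \<inter> {1..int N}))"
      by (auto dest: frequently_ex)
    define A where "A = E \<inter> {1..int N}"
    have "diffset A \<subseteq> diffset E" unfolding A_def by (intro diffset_mono) auto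
    then have translates_bound: "(M + 1) * card A ^ d \<le> nat (int N + 2 * C) ^ d"
      using no_recurrence C unfolding A_def
      by (intro card_power_translates_le_box) blast+
    have "(real M + 1) * (\<delta> * real N) ^ d \<le> (real M + 1) * real (card A) ^ d"
      using N(3) \<open>\<delta> > 0\<close> unfolding A_def by (intro mult_left_mono power_mono) auto
    also have "\<dots> \<le> real (nat (int N + 2 * C)) ^ d"
      using of_nat_mono[OF translates_bound, where 'a = real] by (simp add: algebra_simps)
    also have "\<dots> \<le> (2 * real N) ^ d"
      using N(2) \<open>C \<ge> 0\<close> by (intro power_mono) linarith+
    finally have "(real M + 1) * \<delta> ^ d * real N ^ d \<le> 2 ^ d * real N ^ d"
      by (simp add: power_mult_distrib mult.assoc)
    then have "(real M + 1) * \<delta> ^ d \<le> 2 ^ d" using N(1) by simp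
    moreover have "2 ^ d < real M * \<delta> ^ d"
      using M \<open>\<delta> > 0\<close> by (simp add: power_divide pos_divide_less_eq)
    ultimately show False using zero_less_power[OF \<open>\<delta> > 0\<close>, of d] by (simp add: distrib_right)
  qed
qed

lemma diffset_products_contain_multiples:
  fixes E :: "int set" and \<delta> :: real
  assumes "\<delta> > 0"
    and "\<exists>\<^sub>F N in sequentially. \<delta> * real N \<le> real (card (E \<inter> {1..int N}))"
  obtains K :: int where "K \<noteq> 0" "\<And>t. \<exists>x\<in>diffset E. \<exists>y\<in>diffset E. K * t = x * y"
proof -
  obtain R :: nat where R: "\<And>c::nat \<Rightarrow> int. \<exists>i\<in>{1..int R}. i * c 0 \<in> diffset E"
    using diffset_multiple_recurrence[OF assms, of 1] by auto
  define L :: int where "L = int (fact R)"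
  obtain M :: nat where M: "\<forall>c::nat \<Rightarrow> int. \<exists>s\<in>{1..int M}. \<forall>j<R. s * c j \<in> diffset E"
    using diffset_multiple_recurrence[OF assms, of R] by blast
  obtain s where s: "s \<in> {1..int M}" "\<And>j. j < R \<Longrightarrow> s * (L div int (j + 1)) \<in> diffset E"
    using M[rule_format, of "\<lambda>j. L div int (j + 1)"] by blast
  show thesis
  proof (rule that[of "s * L"])
    show "s * L \<noteq> 0" using s(1) unfolding L_def by auto
    fix t
    obtain i where i: "i \<in> {1..int R}" "i * t \<in> diffset E" using R[of "\<lambda>_. t"] by blast
    then have "int (nat i - 1 + 1) = i" by auto
    with i(1) s(2)[of "nat i - 1"] have "s * (L div i) \<in> diffset E" by auto
    moreover have "nat i dvd fact R" using i(1) by (intro dvd_fact) auto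
    then have "i dvd L" using i(1) unfolding L_def by (simp add: int_dvd_int_iff[symmetric])
    then have "s * L * t = (i * t) * (s * (L div i))" by (auto simp: algebra_simps)
    ultimately show "\<exists>x\<in>diffset E. \<exists>y\<in>diffset E. s * L * t = x * y" using i(2) by blast
  qed
qed

theorem corollary1p4:
  fixes E0 :: "int set"
  assumes "upper_density E0 > 0"
  shows "\<exists>H. int_subgroup H \<and> H \<noteq> {0} \<and>
           H \<subseteq> {x * y - z ^ 2 | x y z. x \<in> diffset E0 \<and> y \<in> diffset E0 \<and> z \<in> diffset E0}"
proof -
  obtain \<delta> :: real where "\<delta> > 0"
    and "\<exists>\<^sub>F N in sequentially. \<delta> * real N \<le> real (card (E0 \<inter> {1..int N}))"
    using upper_density_pos_frequently[OF assms] by blast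
  then obtain K where "K \<noteq> 0" and K: "\<And>t. \<exists>x\<in>diffset E0. \<exists>y\<in>diffset E0. K * t = x * y"
    using diffset_products_contain_multiples by blast
  have "0 \<in> diffset E0" using K[of 1] zero_in_diffset by blast
  have "range (\<lambda>t. K * t) \<subseteq>
      {x * y - z ^ 2 | x y z. x \<in> diffset E0 \<and> y \<in> diffset E0 \<and> z \<in> diffset E0}"
  proof (rule image_subsetI)
    fix t
    obtain x y where "x \<in> diffset E0" "y \<in> diffset E0" "K * t = x * y - 0 ^ 2"
      using K[of t] by auto
    then show "K * t \<in> {x * y - z ^ 2 | x y z. x \<in> diffset E0 \<and> y \<in> diffset E0 \<and> z \<in> diffset E0}"
      using \<open>0 \<in> diffset E0\<close> by blast
  qed
  moreover have "range (\<lambda>t. K * t) \<noteq> {0}" using \<open>K \<noteq> 0\<close> by (metis mult_1_right rangeI singletonD)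
  ultimately show ?thesis using int_subgroup_multiples by blast
qed

end
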